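(* For every $V \in \mathrm{SL}_2(\mathbb C)$ and every $l \in \mathbb N$, we have $$\det \sigma_l\big(\mathrm{Ad}(V)\big) = (l+1)\, S_l^2(v), \qquad \text{where } v = \operatorname{tr} V.$$
   Context: Here $\mathrm{Ad}$ denotes the adjoint action of $\mathrm{SL}_2(\mathbb C)$ on its Lie algebra $\mathfrak{sl}_2(\mathbb C)$ of trace-zero $2\times 2$ complex matrices, $\mathrm{Ad}(V)(g) = V g V^{-1}$; thus $\mathrm{Ad}(V)$ is regarded as a $3\times 3$ matrix in $\mathrm{SL}_3(\mathbb C)$ (explicitly, for $V = \begin{bmatrix} e & f\\ g & h\end{bmatrix}$, $\mathrm{Ad}(V) = \begin{bmatrix} e^2 & -2ef & -f^2\\ -eg & eh+fg & fh\\ -g^2 & 2gh & h^2\end{bmatrix}$). For $l \ge 0$ and a square matrix $U$, $\sigma_l(U) = \sum_{i=0}^{l} U^i$. The $S_l(v)$ are the Chebyshev polynomials of the second kind, defined by $S_0(v)=1$, $S_1(v)=v$, and $S_l(v) = v S_{l-1}(v) - S_{l-2}(v)$ for all integers $l$. *)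

theory Defs
  imports "HOL-Analysis.Analysis"
begin

fun cheb_S :: "nat \<Rightarrow> complex \<Rightarrow> complex" where
  "cheb_S 0 v = 1"
| "cheb_S (Suc 0) v = v"
| "cheb_S (Suc (Suc n)) v = v * cheb_S (Suc n) v - cheb_S n v"

fun mat_pow :: "'a::comm_ring_1^'n^'n \<Rightarrow> nat \<Rightarrow> 'a^'n^'n" where
  "mat_pow U 0 = mat 1"
| "mat_pow U (Suc n) = U ** mat_pow U n"

definition sigma_mat :: "nat \<Rightarrow> 'a::comm_ring_1^'n^'n \<Rightarrow> 'a^'n^'n" where
  "sigma_mat l U = (\<Sum>i\<in>{0..l}. mat_pow U i)"

text \<open>Adjoint action of SL_2(C) on sl_2(C), as the explicit 3x3 matrix.\<close>
definition Ad :: "complex^2^2 \<Rightarrow> complex^3^3" where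
  "Ad V = (let e = V$1$1; f = V$1$2; g = V$2$1; h = V$2$2 in
     vector [vector [e^2, -2*e*f, -(f^2)],
             vector [-(e*g), e*h + f*g, f*h],
             vector [-(g^2), 2*g*h, h^2]])"

end

theory Submission
  imports Defs
begin

(* Every complex 2x2 matrix is conjugate to an upper triangular T = [[a, b], [0, d]], and Ad is
   multiplicative, so Ad V is conjugate to Ad T, which is upper triangular with diagonal
   a^2, a d = 1, d^2. For a triangular matrix, sigma_l is triangular with the geometric sums of
   the diagonal entries on its diagonal, so det sigma_l(Ad V) = (1 + ... + a^(2l)) (l + 1)
   (1 + ... + d^(2l)). Since a d = 1, S_l(a + d) = a^l + a^(l-1) d + ... + d^l, whence
   1 + ... + a^(2l) = a^l S_l(a + d), and likewise for d. *)

lemma Ad_entries: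
  "Ad V $1$1 = (V$1$1)^2" "Ad V $1$2 = -2*V$1$1*V$1$2" "Ad V $1$3 = -((V$1$2)^2)"
  "Ad V $2$1 = -(V$1$1*V$2$1)" "Ad V $2$2 = V$1$1*V$2$2 + V$1$2*V$2$1" "Ad V $2$3 = V$1$2*V$2$2"
  "Ad V $3$1 = -((V$2$1)^2)" "Ad V $3$2 = 2*V$2$1*V$2$2" "Ad V $3$3 = (V$2$2)^2"
  by (simp_all add: Ad_def Let_def)

lemma Ad_mult: "Ad (A ** B) = Ad A ** Ad B"
  unfolding vec_eq_iff forall_3
  by (simp add: Ad_entries matrix_matrix_mult_def sum_3 sum_2 power2_eq_square algebra_simps)

lemma Ad_mat_1: "Ad (mat 1) = mat 1"
  unfolding vec_eq_iff forall_3 by (simp add: Ad_entries mat_def)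

lemma matrix_mul_sum_left:
  fixes A :: "'a::semiring_1^'n^'m"
  shows "A ** (\<Sum>i\<in>I. B i) = (\<Sum>i\<in>I. A ** B i)"
  by (simp add: vec_eq_iff matrix_matrix_mult_def sum_distrib_left sum.swap[of _ I])

lemma matrix_mul_sum_right:
  fixes A :: "'a::semiring_1^'n^'m"
  shows "(\<Sum>i\<in>I. B i) ** A = (\<Sum>i\<in>I. B i ** A)"
  by (simp add: vec_eq_iff matrix_matrix_mult_def sum_distrib_right sum.swap[of _ I])

lemma mat_pow_conj:
  fixes P Q U :: "'a::comm_ring_1^'n^'n"
  assumes "P ** Q = mat 1" "Q ** P = mat 1"
  shows "mat_pow (P ** U ** Q) i = P ** mat_pow U i ** Q"
proof (induction i)
  case 0
  then show ?case using assms by simp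
next
  case (Suc i)
  have "P ** U ** Q ** (P ** mat_pow U i ** Q) = P ** U ** (Q ** P) ** mat_pow U i ** Q"
    by (simp add: matrix_mul_assoc)
  then show ?case using Suc assms by (simp add: matrix_mul_assoc)
qed

lemma sigma_mat_conj:
  fixes P Q U :: "'a::comm_ring_1^'n^'n"
  assumes "P ** Q = mat 1" "Q ** P = mat 1"
  shows "sigma_mat l (P ** U ** Q) = P ** sigma_mat l U ** Q"
  by (simp add: sigma_mat_def mat_pow_conj[OF assms] matrix_mul_sum_left matrix_mul_sum_right)

lemma det_conj:
  fixes P Q A :: "'a::comm_ring_1^'n^'n"
  assumes "P ** Q = mat 1"
  shows "det (P ** A ** Q) = det A"
proof -
  have "det P * det Q = 1"
    using assms by (metis det_I det_mul)
  then show ?thesis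
    by (simp add: det_mul mult.commute mult.left_commute)
qed

lemma trace_conj:
  fixes P Q A :: "'a::comm_ring_1^'n^'n"
  assumes "Q ** P = mat 1"
  shows "trace (P ** A ** Q) = trace A"
  by (metis assms matrix_mul_assoc matrix_mul_lid trace_mul_sym)

lemma det_sigma_mat_conj:
  fixes P Q U :: "'a::comm_ring_1^'n^'n"
  assumes "P ** Q = mat 1" "Q ** P = mat 1"
  shows "det (sigma_mat l (P ** U ** Q)) = det (sigma_mat l U)"
  by (simp add: sigma_mat_conj[OF assms] det_conj[OF assms(1)])

lemma mat_pow_upper_triangular_3:
  fixes M :: "'a::comm_ring_1^3^3"
  assumes "M$2$1 = 0" "M$3$1 = 0" "M$3$2 = 0"
  shows "mat_pow M i $2$1 = 0 \<and> mat_pow M i $3$1 = 0 \<and> mat_pow M i $3$2 = 0 \<and>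
    mat_pow M i $1$1 = (M$1$1)^i \<and> mat_pow M i $2$2 = (M$2$2)^i \<and> mat_pow M i $3$3 = (M$3$3)^i"
  by (induction i) (simp_all add: assms mat_def matrix_matrix_mult_def sum_3)

lemma det_sigma_mat_upper_triangular_3:
  fixes M :: "'a::comm_ring_1^3^3"
  assumes "M$2$1 = 0" "M$3$1 = 0" "M$3$2 = 0"
  shows "det (sigma_mat l M) =
    (\<Sum>i\<in>{0..l}. (M$1$1)^i) * (\<Sum>i\<in>{0..l}. (M$2$2)^i) * (\<Sum>i\<in>{0..l}. (M$3$3)^i)"
  using mat_pow_upper_triangular_3[OF assms] by (simp add: det_3 sigma_mat_def)

lemma upper_triangularize_2:
  fixes V :: "complex^2^2"
  obtains P Q :: "complex^2^2" where "P ** Q = mat 1" "Q ** P = mat 1" "(P ** V ** Q)$2$1 = 0"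
proof (cases "V$2$1 = 0")
  case True
  then show ?thesis by (intro that[of "mat 1" "mat 1"]) simp_all
next
  case False
  define e f g h where "e = V$1$1" "f = V$1$2" "g = V$2$1" "h = V$2$2"
  have "g \<noteq> 0" using False e_f_g_h_def by simp
  define t where "t = e + h"
  define \<mu> where "\<mu> = (t + csqrt (t^2 - 4 * det V)) / 2"
  have eigenvalue: "\<mu>^2 - t*\<mu> + det V = 0"
  proof -
    have "(2*\<mu> - t)^2 = t^2 - 4 * det V" unfolding \<mu>_def by (simp add: field_simps)
    then have "4 * (\<mu>^2 - t*\<mu> + det V) = 0" by (simp add: power2_eq_square algebra_simps)
    then show ?thesis by (simp only: mult_eq_0_iff) simp
  qed
  (* the columns of Q are an eigenvector for \<mu> and a complementary vector, P = Q^-1 *)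
  define P :: "complex^2^2" where "P = vector [vector [0, 1/g], vector [-g, \<mu> - h]]"
  define Q :: "complex^2^2" where "Q = vector [vector [\<mu> - h, -1/g], vector [g, 0]]"
  have "P ** Q = mat 1" "Q ** P = mat 1"
    unfolding vec_eq_iff forall_2 using \<open>g \<noteq> 0\<close>
    by (simp_all add: P_def Q_def matrix_matrix_mult_def sum_2 mat_def field_simps)
  moreover have "(P ** V ** Q)$2$1 = g * (\<mu>^2 - t*\<mu> + det V)"
    by (simp add: P_def Q_def matrix_matrix_mult_def sum_2 det_2 e_f_g_h_def t_def
        power2_eq_square algebra_simps)
  ultimately show ?thesis using eigenvalue that by simp
qed

lemma cheb_S_eq_sum:
  fixes a d :: complex
  assumes "a * d = 1"
  shows "cheb_S n (a + d) = (\<Sum>i\<in>{0..n}. a^i * d^(n-i))"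
proof -
  define h where "h n = (\<Sum>i\<in>{0..n}. a^i * d^(n-i))" for n
  have h_Suc: "h (Suc n) = a^(Suc n) + d * h n" for n
  proof -
    have "h (Suc n) = (\<Sum>i\<in>{0..n}. a^i * d^(Suc n-i)) + a^(Suc n)"
      unfolding h_def by (simp add: sum.atLeast0_atMost_Suc)
    also have "(\<Sum>i\<in>{0..n}. a^i * d^(Suc n-i)) = (\<Sum>i\<in>{0..n}. d * (a^i * d^(n-i)))"
      by (rule sum.cong) (auto simp: Suc_diff_le)
    finally show ?thesis unfolding h_def by (simp add: sum_distrib_left)
  qed
  have "cheb_S n (a + d) = h n"
  proof (induction n "a + d" rule: cheb_S.induct)
    case (3 n)
    have "h (Suc (Suc n)) = (a + d) * h (Suc n) - h n"
      using h_Suc[of "Suc n"] h_Suc[of n] assms by (simp add: algebra_simps)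
    then show ?case using 3 by simp
  qed (simp_all add: h_Suc h_def)
  then show ?thesis unfolding h_def .
qed

lemma geometric_sum_eq_cheb_S:
  fixes a d :: complex
  assumes "a * d = 1"
  shows "(\<Sum>i\<in>{0..n}. (a^2)^i) = a^n * cheb_S n (a + d)"
proof -
  have "a^n * (a^i * d^(n-i)) = (a^2)^i" if "i \<le> n" for i
  proof -
    have "a^n = a^i * a^(n-i)"
      using that by (simp flip: power_add)
    then have "a^n * (a^i * d^(n-i)) = (a^i)^2 * (a * d)^(n-i)"
      by (simp add: power2_eq_square power_mult_distrib)
    then show ?thesis using assms by (simp flip: power_mult) (simp add: mult.commute)
  qed
  then show ?thesis
    by (simp add: cheb_S_eq_sum[OF assms] sum_distrib_left)
qed

theorem proposition3p6:
  fixes V :: "complex^2^2" and l :: nat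
  assumes "det V = 1"
  shows "det (sigma_mat l (Ad V)) = of_nat (l + 1) * (cheb_S l (trace V))^2"
proof -
  obtain P Q :: "complex^2^2" where PQ: "P ** Q = mat 1" and QP: "Q ** P = mat 1"
    and triangular: "(P ** V ** Q)$2$1 = 0"
    using upper_triangularize_2[of V] by blast
  define T where "T = P ** V ** Q"
  have lower: "T$2$1 = 0" using triangular by (simp add: T_def)
  define a d where "a = T$1$1" "d = T$2$2"
  have ad: "a * d = 1"
    using det_conj[OF PQ, of V] assms lower by (simp add: det_2 flip: T_def a_d_def)
  have trace: "trace V = a + d"
    using trace_conj[OF QP, of V] by (simp add: trace_def sum_2 T_def a_d_def)
  have Ad_PQ: "Ad P ** Ad Q = mat 1" "Ad Q ** Ad P = mat 1"
    using PQ QP by (simp_all add: Ad_mat_1 flip: Ad_mult)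
  have "det (sigma_mat l (Ad V)) = det (sigma_mat l (Ad T))"
    by (simp add: T_def Ad_mult det_sigma_mat_conj[OF Ad_PQ])
  also have "\<dots> = (\<Sum>i\<in>{0..l}. (a^2)^i) * (\<Sum>i\<in>{0..l}. 1^i) * (\<Sum>i\<in>{0..l}. (d^2)^i)"
    by (subst det_sigma_mat_upper_triangular_3) (simp_all add: Ad_entries lower ad flip: a_d_def)
  also have "\<dots> = (a^l * cheb_S l (a + d)) * of_nat (l + 1) * (d^l * cheb_S l (d + a))"
    using ad by (simp add: geometric_sum_eq_cheb_S mult.commute[of d])
  also have "\<dots> = of_nat (l + 1) * (a * d)^l * cheb_S l (a + d)^2"
    by (simp add: add.commute[of d] power_mult_distrib power2_eq_square)
  finally show ?thesis by (simp add: trace ad)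
qed

end
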